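(* Let $\Delta$ be a local derivation of $\mathcal{S}$ with $\Delta(G_0)=0$. Then for every $m\in\mathbb{Z}\setminus\{0\}$ there exists $a_m\in\mathbb{C}$ such that $\Delta(G_m)=a_mG_m$.
   Context: $\mathcal{S}$ is the centerless super Virasoro algebra: the Lie superalgebra over $\mathbb{C}$ with basis $\{L_m,G_n: m,n\in\mathbb{Z}\}$, $L_m$ even, $G_n$ odd, and brackets $[L_m,L_n]=(m-n)L_{m+n}$, $[L_m,G_r]=(\frac m2-r)G_{m+r}$, $[G_r,G_s]=2L_{r+s}$. A homogeneous linear map $D$ of parity $|D|$ is a derivation if $D([x,y])=[D(x),y]+(-1)^{|D||x|}[x,D(y)]$ for homogeneous $x,y$; derivations are sums of even and odd ones. A linear map $\Delta:\mathcal{S}\to\mathcal{S}$ is a local derivation if for every $x$ there is a derivation $D_x$ with $\Delta(x)=D_x(x)$. *)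

theory Defs
  imports Complex_Main
begin

text \<open>Elements of the centerless super Virasoro algebra S are represented by pairs
 (f, g) of finitely supported coefficient functions: the element
 sum_m f m * L_m + sum_n g n * G_n.\<close>

type_synonym sva = "(int \<Rightarrow> complex) \<times> (int \<Rightarrow> complex)"

definition sv_carrier :: "sva set" where
  "sv_carrier = {(f, g). finite {n. f n \<noteq> 0} \<and> finite {n. g n \<noteq> 0}}"

definition sv_zero :: sva where "sv_zero = (\<lambda>_. 0, \<lambda>_. 0)"

definition sv_add :: "sva \<Rightarrow> sva \<Rightarrow> sva" where
  "sv_add x y = (\<lambda>k. fst x k + fst y k, \<lambda>k. snd x k + snd y k)"

definition sv_smult :: "complex \<Rightarrow> sva \<Rightarrow> sva" where
  "sv_smult c x = (\<lambda>k. c * fst x k, \<lambda>k. c * snd x k)"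

definition Lb :: "int \<Rightarrow> sva" where
  "Lb m = (\<lambda>k. if k = m then 1 else 0, \<lambda>_. 0)"

definition Gb :: "int \<Rightarrow> sva" where
  "Gb n = (\<lambda>_. 0, \<lambda>k. if k = n then 1 else 0)"

text \<open>Bilinear extension of the super bracket
  [L_m,L_n] = (m-n) L_{m+n}, [L_m,G_r] = (m/2 - r) G_{m+r},
  [G_r,L_m] = -(m/2 - r) G_{m+r}, [G_r,G_s] = 2 L_{r+s}.\<close>
definition sv_br :: "sva \<Rightarrow> sva \<Rightarrow> sva" where
  "sv_br x y =
    (\<lambda>k. (\<Sum>m\<in>{m. fst x m \<noteq> 0}. fst x m * fst y (k - m) * of_int (m - (k - m)))
        + 2 * (\<Sum>r\<in>{r. snd x r \<noteq> 0}. snd x r * snd y (k - r)),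
     \<lambda>k. (\<Sum>m\<in>{m. fst x m \<noteq> 0}. fst x m * snd y (k - m) * (of_int m / 2 - of_int (k - m)))
        - (\<Sum>r\<in>{r. snd x r \<noteq> 0}. snd x r * fst y (k - r) * (of_int (k - r) / 2 - of_int r)))"

definition sv_even :: "sva \<Rightarrow> bool" where "sv_even x \<longleftrightarrow> snd x = (\<lambda>_. 0)"
definition sv_odd :: "sva \<Rightarrow> bool" where "sv_odd x \<longleftrightarrow> fst x = (\<lambda>_. 0)"

definition sv_par :: "bool \<Rightarrow> sva \<Rightarrow> bool" where
  "sv_par p x \<longleftrightarrow> (if p then sv_odd x else sv_even x)"

definition sv_linear :: "(sva \<Rightarrow> sva) \<Rightarrow> bool" where
  "sv_linear D \<longleftrightarrow> (\<forall>x\<in>sv_carrier. D x \<in> sv_carrier) \<and>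
     (\<forall>x\<in>sv_carrier. \<forall>y\<in>sv_carrier. \<forall>c.
        D (sv_add (sv_smult c x) y) = sv_add (sv_smult c (D x)) (D y))"

definition sv_hom_derivation :: "bool \<Rightarrow> (sva \<Rightarrow> sva) \<Rightarrow> bool" where
  "sv_hom_derivation p D \<longleftrightarrow> sv_linear D \<and>
     (\<forall>q. \<forall>x\<in>sv_carrier. sv_par q x \<longrightarrow> sv_par (p \<noteq> q) (D x)) \<and>
     (\<forall>q1 q2. \<forall>x\<in>sv_carrier. \<forall>y\<in>sv_carrier. sv_par q1 x \<longrightarrow> sv_par q2 y \<longrightarrow>
        D (sv_br x y) = sv_add (sv_br (D x) y)
          (sv_smult (if p \<and> q1 then -1 else 1) (sv_br x (D y))))"

definition sv_derivation :: "(sva \<Rightarrow> sva) \<Rightarrow> bool" where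
  "sv_derivation D \<longleftrightarrow> (\<exists>D0 D1. sv_hom_derivation False D0 \<and> sv_hom_derivation True D1 \<and>
     (\<forall>x\<in>sv_carrier. D x = sv_add (D0 x) (D1 x)))"

definition sv_local_derivation :: "(sva \<Rightarrow> sva) \<Rightarrow> bool" where
  "sv_local_derivation \<Delta> \<longleftrightarrow> sv_linear \<Delta> \<and>
     (\<forall>x\<in>sv_carrier. \<exists>D. sv_derivation D \<and> \<Delta> x = D x)"

end

theory Submission
  imports Defs "HOL-Computational_Algebra.Polynomial"
begin

(* Every derivation of S acts on the odd part as ad x for a single x: away from degree n the
   components of D(G_n) are forced by [L_0, G_n] = -n G_n, and the diagonal ones by
   [G_r, G_s] = 2 L_(r+s) and [L_m, G_r] = (m/2 - r) G_(m+r). Apply the local derivation to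
   G_n - z^(n-p) G_p and pass to Laurent generating functions in z: the contributions of
   [x, G_n] and [x, G_p] are one series shifted by n and by p, so they cancel, whatever x is.
   Hence the generating functions of Delta(G_n) and Delta(G_p) differ by the factor z^(n-p).
   Taking p = 0, where Delta(G_0) = 0, confines Delta(G_n) to span {G_n, G_2n}; taking p = -n
   compares the G_2n-component of Delta(G_n) with the G_-2n-component of Delta(G_-n), and the
   two can only agree for all z if both vanish. *)

lemma Gb_carrier [simp]: "Gb n \<in> sv_carrier"
  unfolding sv_carrier_def Gb_def by simp

lemma Lb_carrier [simp]: "Lb n \<in> sv_carrier"
  unfolding sv_carrier_def Lb_def by simp

lemma sv_zero_carrier [simp]: "sv_zero \<in> sv_carrier"
  unfolding sv_zero_def sv_carrier_def by simp

lemma Gb_odd [simp]: "sv_par True (Gb n)"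
  unfolding sv_par_def sv_odd_def Gb_def by simp

lemma Lb_even [simp]: "sv_par False (Lb n)"
  unfolding sv_par_def sv_even_def Lb_def by simp

lemma sv_carrier_iff:
  "x \<in> sv_carrier \<longleftrightarrow> finite {k. fst x k \<noteq> 0} \<and> finite {k. snd x k \<noteq> 0}"
  by (cases x) (simp add: sv_carrier_def)

lemma finite_support_shift:
  "finite {j. f j \<noteq> 0} \<Longrightarrow> finite {j::int. f (j - n) \<noteq> 0}"
proof -
  assume fin: "finite {j. f j \<noteq> 0}"
  have "{j. f (j - n) \<noteq> 0} = (\<lambda>k. k + n) ` {j. f j \<noteq> 0}"
    by (auto intro: image_eqI[of _ _ "_ - n"])
  with fin show ?thesis by simp
qed

lemma finite_support_mult:
  "finite {j. f j \<noteq> 0} \<Longrightarrow> finite {j. c j * f j \<noteq> (0::complex)}"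
  by (rule finite_subset[rotated]) auto

lemma sv_add_carrier [simp]:
  assumes "x \<in> sv_carrier" "y \<in> sv_carrier"
  shows "sv_add x y \<in> sv_carrier"
proof -
  have "{k. fst x k + fst y k \<noteq> 0} \<subseteq> {k. fst x k \<noteq> 0} \<union> {k. fst y k \<noteq> 0}"
    and "{k. snd x k + snd y k \<noteq> 0} \<subseteq> {k. snd x k \<noteq> 0} \<union> {k. snd y k \<noteq> 0}"
    by auto
  with assms show ?thesis
    unfolding sv_carrier_iff sv_add_def by (auto intro: finite_subset)
qed

lemma sv_smult_carrier [simp]:
  assumes "x \<in> sv_carrier"
  shows "sv_smult c x \<in> sv_carrier"
proof -
  have "{k. c * fst x k \<noteq> 0} \<subseteq> {k. fst x k \<noteq> 0}" and "{k. c * snd x k \<noteq> 0} \<subseteq> {k. snd x k \<noteq> 0}"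
    by auto
  with assms show ?thesis
    unfolding sv_carrier_iff sv_smult_def by (auto intro: finite_subset)
qed

lemma sum_support_mult_delta:
  fixes g :: "int \<Rightarrow> complex"
  assumes "finite {r. g r \<noteq> 0}"
  shows "(\<Sum>r\<in>{r. g r \<noteq> 0}. g r * (if k - r = n then 1 else 0) * c r) = g (k - n) * c (k - n)"
proof -
  have "(\<Sum>r\<in>{r. g r \<noteq> 0}. g r * (if k - r = n then 1 else 0) * c r)
      = (\<Sum>r\<in>{r. g r \<noteq> 0}. if r = k - n then g r * c r else 0)"
    by (intro sum.cong) auto
  also have "\<dots> = g (k - n) * c (k - n)"
    using assms by (auto simp: sum.delta)
  finally show ?thesis .
qed

lemma sv_br_Gb_right:
  assumes "x \<in> sv_carrier"
  shows "sv_br x (Gb n) =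
    (\<lambda>k. 2 * snd x (k - n), \<lambda>k. fst x (k - n) * (of_int (k - n) / 2 - of_int n))"
proof -
  have fin: "finite {r. fst x r \<noteq> 0}" "finite {r. snd x r \<noteq> 0}"
    using assms by (simp_all add: sv_carrier_iff)
  have "(\<Sum>m\<in>{m. fst x m \<noteq> 0}. fst x m * (if k - m = n then 1 else 0) * (of_int m / 2 - of_int (k - m)))
      = fst x (k - n) * (of_int (k - n) / 2 - of_int n)" for k
  proof -
    have "of_int (k - n) / 2 - of_int (k - (k - n)) = (of_int (k - n) / 2 - of_int n :: complex)"
      by simp
    then show ?thesis
      using sum_support_mult_delta[OF fin(1), of k n "\<lambda>m. of_int m / 2 - of_int (k - m)"] by simp
  qed
  moreover have "(\<Sum>r\<in>{r. snd x r \<noteq> 0}. snd x r * (if k - r = n then 1 else 0)) = snd x (k - n)" for k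
    using sum_support_mult_delta[OF fin(2), where c = "\<lambda>_. 1"] by simp
  ultimately show ?thesis unfolding sv_br_def Gb_def by simp
qed

lemma sv_br_Gb_left:
  "sv_br (Gb n) y = (\<lambda>k. 2 * snd y (k - n), \<lambda>k. - (fst y (k - n) * (of_int (k - n) / 2 - of_int n)))"
  unfolding sv_br_def Gb_def by simp

lemma sv_br_Lb_left:
  "sv_br (Lb n) y =
    (\<lambda>k. fst y (k - n) * of_int (n - (k - n)), \<lambda>k. snd y (k - n) * (of_int n / 2 - of_int (k - n)))"
  unfolding sv_br_def Lb_def by simp

lemma sv_br_Lb_Gb: "sv_br (Lb m) (Gb r) = sv_smult (of_int m / 2 - of_int r) (Gb (m + r))"
  unfolding sv_br_Lb_left by (auto simp: Gb_def sv_smult_def fun_eq_iff)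

lemma sv_br_Gb_Gb: "sv_br (Gb r) (Gb s) = sv_smult 2 (Lb (r + s))"
  unfolding sv_br_Gb_left by (auto simp: Gb_def Lb_def sv_smult_def fun_eq_iff)

lemma sv_br_Gb_add_left:
  assumes "x \<in> sv_carrier" "y \<in> sv_carrier"
  shows "sv_br (sv_add x y) (Gb n) = sv_add (sv_br x (Gb n)) (sv_br y (Gb n))"
proof -
  have "sv_add x y \<in> sv_carrier" using assms by simp
  then show ?thesis
    using assms by (simp add: sv_br_Gb_right sv_add_def algebra_simps)
qed

lemma sv_br_Gb_carrier:
  assumes "x \<in> sv_carrier"
  shows "sv_br x (Gb n) \<in> sv_carrier"
  using assms unfolding sv_carrier_iff sv_br_Gb_right[OF assms]
  by (auto intro: finite_subset[OF _ finite_support_shift])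

lemma sv_hom_derivation_linear:
  "sv_hom_derivation p D \<Longrightarrow> x \<in> sv_carrier \<Longrightarrow> y \<in> sv_carrier \<Longrightarrow>
    D (sv_add (sv_smult c x) y) = sv_add (sv_smult c (D x)) (D y)"
  unfolding sv_hom_derivation_def sv_linear_def by blast

lemma sv_hom_derivation_carrier: "sv_hom_derivation p D \<Longrightarrow> x \<in> sv_carrier \<Longrightarrow> D x \<in> sv_carrier"
  unfolding sv_hom_derivation_def sv_linear_def by blast

lemma sv_hom_derivation_parity:
  "sv_hom_derivation p D \<Longrightarrow> x \<in> sv_carrier \<Longrightarrow> sv_par q x \<Longrightarrow> sv_par (p \<noteq> q) (D x)"
  unfolding sv_hom_derivation_def by blast

lemma sv_hom_derivation_leibniz:
  "sv_hom_derivation p D \<Longrightarrow> x \<in> sv_carrier \<Longrightarrow> y \<in> sv_carrier \<Longrightarrow>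
    sv_par q1 x \<Longrightarrow> sv_par q2 y \<Longrightarrow>
    D (sv_br x y) = sv_add (sv_br (D x) y) (sv_smult (if p \<and> q1 then -1 else 1) (sv_br x (D y)))"
  unfolding sv_hom_derivation_def by blast

lemma sv_hom_derivation_zero:
  assumes "sv_hom_derivation p D"
  shows "D sv_zero = sv_zero"
proof -
  have "sv_add (sv_smult 1 sv_zero) sv_zero = sv_zero"
    unfolding sv_add_def sv_smult_def sv_zero_def by simp
  then have "D sv_zero = sv_add (D sv_zero) (D sv_zero)"
    using sv_hom_derivation_linear[OF assms sv_zero_carrier sv_zero_carrier, of 1]
    by (simp add: sv_smult_def)
  then have "fst (D sv_zero) = (\<lambda>_. 0)" "snd (D sv_zero) = (\<lambda>_. 0)"
    unfolding sv_add_def by (metis (no_types, lifting) add_cancel_left_left fst_conv snd_conv)+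
  then show ?thesis unfolding sv_zero_def by (metis prod.collapse)
qed

lemma sv_hom_derivation_smult:
  assumes "sv_hom_derivation p D" "x \<in> sv_carrier"
  shows "D (sv_smult c x) = sv_smult c (D x)"
proof -
  have "\<And>y. sv_add y sv_zero = y" unfolding sv_add_def sv_zero_def by simp
  then show ?thesis
    using sv_hom_derivation_linear[OF assms sv_zero_carrier, of c] sv_hom_derivation_zero[OF assms(1)]
    by simp
qed

lemma sv_hom_derivation_Gb_degree:
  assumes D: "sv_hom_derivation p D"
  shows "of_int (k - n) * fst (D (Gb n)) k = fst (sv_br (D (Lb 0)) (Gb n)) k"
    and "of_int (k - n) * snd (D (Gb n)) k = snd (sv_br (D (Lb 0)) (Gb n)) k"
proof -
  have "sv_smult (- of_int n) (D (Gb n)) = D (sv_br (Lb 0) (Gb n))"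
    by (simp add: sv_br_Lb_Gb sv_hom_derivation_smult[OF D])
  also have "\<dots> = sv_add (sv_br (D (Lb 0)) (Gb n)) (sv_br (Lb 0) (D (Gb n)))"
    using sv_hom_derivation_leibniz[OF D Lb_carrier Gb_carrier Lb_even Gb_odd]
    by (simp add: sv_smult_def)
  finally have eq: "sv_smult (- of_int n) (D (Gb n)) =
    sv_add (sv_br (D (Lb 0)) (Gb n)) (sv_br (Lb 0) (D (Gb n)))" .
  from arg_cong[OF eq, of "\<lambda>x. fst x k"]
  show "of_int (k - n) * fst (D (Gb n)) k = fst (sv_br (D (Lb 0)) (Gb n)) k"
    unfolding sv_br_Lb_left by (simp add: sv_add_def sv_smult_def algebra_simps)
  from arg_cong[OF eq, of "\<lambda>x. snd x k"]
  show "of_int (k - n) * snd (D (Gb n)) k = snd (sv_br (D (Lb 0)) (Gb n)) k"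
    unfolding sv_br_Lb_left by (simp add: sv_add_def sv_smult_def algebra_simps)
qed

lemma even_derivation_Gb_diagonal:
  assumes D: "sv_hom_derivation False D"
  shows "\<exists>u. \<forall>n. snd (D (Gb n)) n = - of_int n * u"
proof -
  define g where "g n = snd (D (Gb n)) n" for n
  define \<beta> where "\<beta> n = fst (D (Lb n)) n" for n
  have additive: "\<beta> (r + s) = g r + g s" for r s
  proof -
    have "sv_smult 2 (D (Lb (r + s))) = D (sv_br (Gb r) (Gb s))"
      by (simp add: sv_br_Gb_Gb sv_hom_derivation_smult[OF D])
    also have "\<dots> = sv_add (sv_br (D (Gb r)) (Gb s)) (sv_br (Gb r) (D (Gb s)))"
      using sv_hom_derivation_leibniz[OF D Gb_carrier Gb_carrier Gb_odd Gb_odd]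
      by (simp add: sv_smult_def)
    finally have eq: "sv_smult 2 (D (Lb (r + s))) = \<dots>" .
    have "2 * \<beta> (r + s) = 2 * g r + 2 * g s"
      using arg_cong[OF eq, of "\<lambda>x. fst x (r + s)"]
      by (simp add: sv_br_Gb_right[OF sv_hom_derivation_carrier[OF D Gb_carrier]] sv_br_Gb_left
          sv_add_def sv_smult_def \<beta>_def g_def)
    then show ?thesis by (metis distrib_left mult_cancel_left zero_neq_numeral)
  qed
  have "sv_smult (1/2) (D (Gb 1)) = D (sv_br (Lb 1) (Gb 0))"
    by (simp add: sv_br_Lb_Gb sv_hom_derivation_smult[OF D])
  also have "\<dots> = sv_add (sv_br (D (Lb 1)) (Gb 0)) (sv_br (Lb 1) (D (Gb 0)))"
    using sv_hom_derivation_leibniz[OF D Lb_carrier Gb_carrier Lb_even Gb_odd]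
    by (simp add: sv_smult_def)
  finally have eq: "sv_smult (1/2) (D (Gb 1)) = \<dots>" .
  have "g 1 = \<beta> 1 + g 0"
    using arg_cong[OF eq, of "\<lambda>x. snd x 1"]
    by (simp add: sv_br_Gb_right[OF sv_hom_derivation_carrier[OF D Lb_carrier]] sv_br_Lb_left
        sv_add_def sv_smult_def \<beta>_def g_def)
  then have g0: "g 0 = 0" using additive[of 1 0] by simp
  have linear: "g n = of_int n * g 1" for n
  proof (induction n rule: int_induct[where k = 0])
    case base then show ?case using g0 by simp
  next
    case (step1 i) then show ?case using additive[of i 1] additive[of "i + 1" 0] g0
      by (simp add: algebra_simps)
  next
    case (step2 i) then show ?case using additive[of "i - 1" 1] additive[of i 0] g0
      by (simp add: algebra_simps)
  qed
  show ?thesis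
  proof (intro exI allI)
    show "snd (D (Gb n)) n = - of_int n * - g 1" for n
      using linear[of n] by (simp add: g_def)
  qed
qed

lemma odd_derivation_Gb_diagonal:
  assumes D: "sv_hom_derivation True D"
  shows "\<exists>v. \<forall>n. fst (D (Gb n)) n = v"
proof -
  define g where "g n = fst (D (Gb n)) n" for n
  define \<beta> where "\<beta> n = snd (D (Lb n)) n" for n
  have from_LG: "(of_int m / 2 - of_int r) * g (m + r) = 2 * \<beta> m + of_int (m - r) * g r" for m r
  proof -
    have "sv_smult (of_int m / 2 - of_int r) (D (Gb (m + r))) = D (sv_br (Lb m) (Gb r))"
      by (simp add: sv_br_Lb_Gb sv_hom_derivation_smult[OF D])
    also have "\<dots> = sv_add (sv_br (D (Lb m)) (Gb r)) (sv_br (Lb m) (D (Gb r)))"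
      using sv_hom_derivation_leibniz[OF D Lb_carrier Gb_carrier Lb_even Gb_odd]
      by (simp add: sv_smult_def)
    finally have eq: "sv_smult (of_int m / 2 - of_int r) (D (Gb (m + r))) = \<dots>" .
    from arg_cong[OF eq, of "\<lambda>x. fst x (m + r)"] show ?thesis
      by (simp add: sv_br_Gb_right[OF sv_hom_derivation_carrier[OF D Lb_carrier]] sv_br_Lb_left
          sv_add_def sv_smult_def \<beta>_def g_def)
  qed
  have from_GG: "2 * \<beta> (r + s) = g r * (of_int r / 2 - of_int s) + g s * (of_int s / 2 - of_int r)"
    for r s
  proof -
    have "sv_smult 2 (D (Lb (r + s))) = D (sv_br (Gb r) (Gb s))"
      by (simp add: sv_br_Gb_Gb sv_hom_derivation_smult[OF D])
    also have "\<dots> = sv_add (sv_br (D (Gb r)) (Gb s)) (sv_smult (-1) (sv_br (Gb r) (D (Gb s))))"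
      using sv_hom_derivation_leibniz[OF D Gb_carrier Gb_carrier Gb_odd Gb_odd] by simp
    finally have eq: "sv_smult 2 (D (Lb (r + s))) = \<dots>" .
    from arg_cong[OF eq, of "\<lambda>x. snd x (r + s)"] show ?thesis
      by (simp add: sv_br_Gb_right[OF sv_hom_derivation_carrier[OF D Gb_carrier]] sv_br_Gb_left
          sv_add_def sv_smult_def \<beta>_def g_def)
  qed
  have opposite: "5 * g 0 = g m + 4 * g (- m)" if "m \<noteq> 0" for m
  proof -
    have "of_int m * (5 * g 0) = 2 * ((of_int m / 2 + of_int m) * g 0 + of_int m * g 0)"
      by (simp add: field_simps)
    also have "\<dots> = 2 * (2 * \<beta> m + of_int (2 * m) * g (- m) + of_int m * g 0)"
      using from_LG[of m "- m"] by simp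
    also have "\<dots> = of_int m * (g m + 4 * g (- m))"
      using from_GG[of m 0] by (simp add: field_simps)
    finally show ?thesis using that by simp
  qed
  have "g n = g 0" for n
  proof (cases "n = 0")
    case False
    with opposite[of n] opposite[of "- n"] show ?thesis by simp
  qed simp
  then show ?thesis by (auto simp: g_def)
qed

lemma sv_hom_derivation_Gb_inner:
  assumes D: "sv_hom_derivation p D"
  shows "\<exists>x\<in>sv_carrier. \<forall>n. D (Gb n) = sv_br x (Gb n)"
proof -
  obtain u v where diag: "\<And>n. fst (D (Gb n)) n = 2 * v" "\<And>n. snd (D (Gb n)) n = - of_int n * u"
  proof (cases p)
    case True
    with D obtain v where "\<forall>n. fst (D (Gb n)) n = v"
      using odd_derivation_Gb_diagonal by auto
    moreover have "snd (D (Gb n)) n = 0" for n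
      using sv_hom_derivation_parity[OF D Gb_carrier Gb_odd] True by (simp add: sv_par_def sv_even_def)
    ultimately show thesis using that[of "v / 2" 0] by simp
  next
    case False
    with D obtain u where "\<forall>n. snd (D (Gb n)) n = - of_int n * u"
      using even_derivation_Gb_diagonal by auto
    moreover have "fst (D (Gb n)) n = 0" for n
      using sv_hom_derivation_parity[OF D Gb_carrier Gb_odd] False by (simp add: sv_par_def sv_odd_def)
    ultimately show thesis using that[of 0 u] by simp
  qed
  have L0_carrier: "D (Lb 0) \<in> sv_carrier"
    by (rule sv_hom_derivation_carrier[OF D Lb_carrier])
  \<comment> \<open>ad L_0 multiplies degree j by -j, so x is D (Lb 0) divided by the degree; its degree-0
    entries, where that division gives junk, are read off from the diagonal.\<close>
  define x where "x = (\<lambda>j. if j = 0 then u else fst (D (Lb 0)) j / of_int j,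
                       \<lambda>j. if j = 0 then v else snd (D (Lb 0)) j / of_int j)"
  have "{j. fst x j \<noteq> 0} \<subseteq> insert 0 {j. fst (D (Lb 0)) j \<noteq> 0}"
    and "{j. snd x j \<noteq> 0} \<subseteq> insert 0 {j. snd (D (Lb 0)) j \<noteq> 0}"
    by (auto simp: x_def)
  with L0_carrier have x_carrier: "x \<in> sv_carrier"
    unfolding sv_carrier_iff by (auto intro: finite_subset)
  have "D (Gb n) = sv_br x (Gb n)" for n
  proof -
    have "fst (D (Gb n)) k = 2 * snd x (k - n) \<and>
      snd (D (Gb n)) k = fst x (k - n) * (of_int (k - n) / 2 - of_int n)" for k
    proof (cases "k = n")
      case True
      then show ?thesis using diag by (simp add: x_def)
    next
      case False
      then have "of_int (k - n) \<noteq> (0::complex)" by simp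
      then have "fst (D (Gb n)) k = 2 * snd (D (Lb 0)) (k - n) / of_int (k - n)"
        and "snd (D (Gb n)) k = fst (D (Lb 0)) (k - n) / of_int (k - n) * (of_int (k - n) / 2 - of_int n)"
        using sv_hom_derivation_Gb_degree[OF D, of k n]
        by (simp_all add: sv_br_Gb_right[OF L0_carrier] field_simps)
      with False show ?thesis by (simp add: x_def)
    qed
    then show ?thesis by (simp add: sv_br_Gb_right[OF x_carrier] prod_eq_iff fun_eq_iff)
  qed
  with x_carrier show ?thesis by blast
qed

lemma sv_derivation_Gb_inner:
  assumes "sv_derivation D"
  shows "\<exists>x\<in>sv_carrier. \<forall>n. D (Gb n) = sv_br x (Gb n)"
proof -
  obtain D0 D1 where D0: "sv_hom_derivation False D0" and D1: "sv_hom_derivation True D1"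
    and D: "\<forall>x\<in>sv_carrier. D x = sv_add (D0 x) (D1 x)"
    using assms unfolding sv_derivation_def by blast
  obtain x0 x1 where "x0 \<in> sv_carrier" "\<forall>n. D0 (Gb n) = sv_br x0 (Gb n)"
    and "x1 \<in> sv_carrier" "\<forall>n. D1 (Gb n) = sv_br x1 (Gb n)"
    using sv_hom_derivation_Gb_inner[OF D0] sv_hom_derivation_Gb_inner[OF D1] by blast
  with D show ?thesis
    by (intro bexI[of _ "sv_add x0 x1"]) (simp_all add: sv_br_Gb_add_left)
qed

definition laurent_eval :: "(int \<Rightarrow> complex) \<Rightarrow> complex \<Rightarrow> complex" where
  "laurent_eval f z = (\<Sum>j | f j \<noteq> 0. f j * z powi j)"

lemma laurent_eval_superset:
  "finite A \<Longrightarrow> {j. f j \<noteq> 0} \<subseteq> A \<Longrightarrow> laurent_eval f z = (\<Sum>j\<in>A. f j * z powi j)"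
  unfolding laurent_eval_def by (rule sum.mono_neutral_left) auto

lemma laurent_eval_single:
  assumes "\<And>j. j \<noteq> a \<Longrightarrow> f j = 0"
  shows "laurent_eval f z = f a * z powi a"
  using laurent_eval_superset[of "{a}" f z] assms by auto

lemma laurent_eval_cmult: "laurent_eval (\<lambda>j. c * f j) z = c * laurent_eval f z"
  by (cases "c = 0") (simp_all add: laurent_eval_def sum_distrib_left mult.assoc)

lemma laurent_eval_add:
  assumes "finite {j. f j \<noteq> 0}" "finite {j. g j \<noteq> 0}"
  shows "laurent_eval (\<lambda>j. f j + g j) z = laurent_eval f z + laurent_eval g z"
proof -
  let ?A = "{j. f j \<noteq> 0} \<union> {j. g j \<noteq> 0}"
  have "finite ?A" using assms by simp
  moreover have "{j. f j + g j \<noteq> 0} \<subseteq> ?A" by auto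
  ultimately show ?thesis
    using laurent_eval_superset[of ?A f z] laurent_eval_superset[of ?A g z]
      laurent_eval_superset[of ?A "\<lambda>j. f j + g j" z]
    by (auto simp: sum.distrib distrib_right)
qed

lemma laurent_eval_shift:
  assumes "z \<noteq> 0"
  shows "laurent_eval (\<lambda>j. f (j - n)) z = z powi n * laurent_eval f z"
proof -
  have "{j. f (j - n) \<noteq> 0} = (\<lambda>k. k + n) ` {j. f j \<noteq> 0}"
    by (auto intro: image_eqI[of _ _ "_ - n"])
  then have "laurent_eval (\<lambda>j. f (j - n)) z = (\<Sum>k | f k \<noteq> 0. f k * z powi (k + n))"
    unfolding laurent_eval_def by (simp add: sum.reindex inj_on_def)
  also have "\<dots> = z powi n * laurent_eval f z"
    unfolding laurent_eval_def sum_distrib_left using \<open>z \<noteq> 0\<close>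
    by (intro sum.cong) (auto simp: power_int_add)
  finally show ?thesis .
qed

lemma laurent_eval_poly:
  assumes fin: "finite {j. f j \<noteq> 0}"
  obtains p N where "\<And>z. z \<noteq> 0 \<Longrightarrow> poly p z = z ^ N * laurent_eval f z"
    and "\<And>j. f j \<noteq> 0 \<Longrightarrow> coeff p (nat (j + int N)) = f j"
proof -
  define S where "S = {j. f j \<noteq> 0}"
  define N where "N = (\<Sum>j\<in>S. nat \<bar>j\<bar>)"
  have shift_nonneg: "0 \<le> j + int N" if "j \<in> S" for j
  proof -
    have "nat \<bar>j\<bar> \<le> N" unfolding N_def using fin that by (intro member_le_sum) (auto simp: S_def)
    then show ?thesis by linarith
  qed
  define p where "p = (\<Sum>j\<in>S. monom (f j) (nat (j + int N)))"
  have "poly p z = z ^ N * laurent_eval f z" if "z \<noteq> 0" for z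
  proof -
    have "poly p z = (\<Sum>j\<in>S. f j * z powi (j + int N))"
      unfolding p_def poly_sum poly_monom
      by (intro sum.cong refl) (simp add: shift_nonneg power_int_def)
    also have "\<dots> = z ^ N * laurent_eval f z"
      unfolding laurent_eval_def S_def sum_distrib_left using that
      by (intro sum.cong) (auto simp: power_int_add)
    finally show ?thesis .
  qed
  moreover have "coeff p (nat (j + int N)) = f j" if "f j \<noteq> 0" for j
  proof -
    have "j \<in> S" using that by (simp add: S_def)
    then have "coeff p (nat (j + int N)) = (\<Sum>i\<in>S. if i = j then f i else 0)"
      unfolding p_def coeff_sum coeff_monom
      using shift_nonneg \<open>j \<in> S\<close> by (intro sum.cong refl) (auto simp: nat_eq_iff2)
    also have "\<dots> = f j" using fin \<open>j \<in> S\<close> by (simp add: S_def)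
    finally show ?thesis .
  qed
  ultimately show thesis by (rule that)
qed

lemma laurent_eval_eq_0_imp_zero:
  assumes fin: "finite {j. f j \<noteq> 0}" and vanish: "\<And>z. z \<noteq> 0 \<Longrightarrow> laurent_eval f z = 0"
  shows "f j = 0"
proof (rule ccontr)
  assume fj: "f j \<noteq> 0"
  obtain p N where p: "\<And>z. z \<noteq> 0 \<Longrightarrow> poly p z = z ^ N * laurent_eval f z"
    and coeff_p: "\<And>j. f j \<noteq> 0 \<Longrightarrow> coeff p (nat (j + int N)) = f j"
    using laurent_eval_poly[OF fin] by metis
  have "p = 0"
  proof (rule ccontr)
    assume "p \<noteq> 0"
    then have "finite {z. poly p z = 0}" by (rule poly_roots_finite)
    moreover have "- {0} \<subseteq> {z. poly p z = 0}"
    proof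
      fix z :: complex
      assume "z \<in> - {0}"
      then show "z \<in> {z. poly p z = 0}" using p[of z] vanish[of z] by simp
    qed
    ultimately have "finite (insert 0 (- {0 :: complex}))" by (auto intro: finite_subset[rotated])
    moreover have "insert 0 (- {0}) = (UNIV :: complex set)" by auto
    ultimately show False using infinite_UNIV_char_0 by metis
  qed
  then show False using coeff_p[OF fj] fj by simp
qed

lemma sv_local_derivation_linear:
  "sv_local_derivation \<Delta> \<Longrightarrow> x \<in> sv_carrier \<Longrightarrow> y \<in> sv_carrier \<Longrightarrow>
    \<Delta> (sv_add (sv_smult c x) y) = sv_add (sv_smult c (\<Delta> x)) (\<Delta> y)"
  unfolding sv_local_derivation_def sv_linear_def by blast

lemma sv_local_derivation_carrier:
  "sv_local_derivation \<Delta> \<Longrightarrow> x \<in> sv_carrier \<Longrightarrow> \<Delta> x \<in> sv_carrier"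
  unfolding sv_local_derivation_def sv_linear_def by blast

lemma sv_derivation_linear:
  assumes "sv_derivation D" "x \<in> sv_carrier" "y \<in> sv_carrier"
  shows "D (sv_add (sv_smult c x) y) = sv_add (sv_smult c (D x)) (D y)"
proof -
  obtain D0 D1 where D0: "sv_hom_derivation False D0" and D1: "sv_hom_derivation True D1"
    and D: "\<forall>x\<in>sv_carrier. D x = sv_add (D0 x) (D1 x)"
    using assms(1) unfolding sv_derivation_def by blast
  have "D (sv_add (sv_smult c x) y) = sv_add (D0 (sv_add (sv_smult c x) y)) (D1 (sv_add (sv_smult c x) y))"
    using D assms(2,3) by simp
  also have "\<dots> = sv_add (sv_smult c (sv_add (D0 x) (D1 x))) (sv_add (D0 y) (D1 y))"
    unfolding sv_hom_derivation_linear[OF D0 assms(2,3)] sv_hom_derivation_linear[OF D1 assms(2,3)]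
    by (simp add: sv_add_def sv_smult_def algebra_simps)
  finally show ?thesis using D assms(2,3) by simp
qed

lemma sv_local_derivation_Gb_pair:
  assumes \<Delta>: "sv_local_derivation \<Delta>"
  shows "\<exists>x\<in>sv_carrier. sv_add (sv_smult t (\<Delta> (Gb p))) (\<Delta> (Gb n)) =
    sv_add (sv_smult t (sv_br x (Gb p))) (sv_br x (Gb n))"
proof -
  define y where "y = sv_add (sv_smult t (Gb p)) (Gb n)"
  obtain D where D: "sv_derivation D" and \<Delta>_y: "\<Delta> y = D y"
    using \<Delta> unfolding sv_local_derivation_def y_def by force
  obtain x where x: "x \<in> sv_carrier" "\<forall>k. D (Gb k) = sv_br x (Gb k)"
    using sv_derivation_Gb_inner[OF D] by blast
  have "sv_add (sv_smult t (\<Delta> (Gb p))) (\<Delta> (Gb n)) = \<Delta> y"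
    unfolding y_def by (simp add: sv_local_derivation_linear[OF \<Delta>])
  also have "\<dots> = D y" by (rule \<Delta>_y)
  also have "\<dots> = sv_add (sv_smult t (sv_br x (Gb p))) (sv_br x (Gb n))"
    unfolding y_def by (simp add: sv_derivation_linear[OF D] x(2))
  finally show ?thesis using x(1) by blast
qed

lemma laurent_eval_fst_br_Gb:
  assumes "x \<in> sv_carrier" "z \<noteq> 0"
  shows "laurent_eval (fst (sv_br x (Gb n))) z = 2 * z powi n * laurent_eval (snd x) z"
  by (simp add: sv_br_Gb_right[OF assms(1)] laurent_eval_cmult laurent_eval_shift[OF assms(2)])

lemma laurent_eval_weighted_snd_br_Gb:
  assumes "x \<in> sv_carrier" "z \<noteq> 0"
  shows "laurent_eval (\<lambda>j. of_int ((j - p - 2 * n) * (j - n - 2 * p)) * snd (sv_br x (Gb n)) j) z =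
    z powi n / 2 * laurent_eval (\<lambda>k. of_int ((k - 2 * n) * (k - 2 * p) * (k - n - p)) * fst x k) z"
proof -
  define F where "F = (\<lambda>k. of_int ((k - 2 * n) * (k - 2 * p) * (k - n - p)) * fst x k)"
  have "laurent_eval (\<lambda>j. 1 / 2 * F (j - n)) z = z powi n / 2 * laurent_eval F z"
    unfolding laurent_eval_cmult laurent_eval_shift[OF assms(2)] by simp
  moreover have "(\<lambda>j. of_int ((j - p - 2 * n) * (j - n - 2 * p)) * snd (sv_br x (Gb n)) j) =
    (\<lambda>j. 1 / 2 * F (j - n))"
    by (simp add: sv_br_Gb_right[OF assms(1)] F_def fun_eq_iff field_simps)
  ultimately show ?thesis
    unfolding F_def by simp
qed

lemma laurent_eval_sv_combination:
  assumes "a \<in> sv_carrier" "b \<in> sv_carrier"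
  shows "laurent_eval (fst (sv_add (sv_smult t a) b)) z = t * laurent_eval (fst a) z + laurent_eval (fst b) z"
    and "laurent_eval (\<lambda>j. w j * snd (sv_add (sv_smult t a) b) j) z =
      t * laurent_eval (\<lambda>j. w j * snd a j) z + laurent_eval (\<lambda>j. w j * snd b j) z"
proof -
  have "finite {j. fst a j \<noteq> 0}" "finite {j. fst b j \<noteq> 0}"
    "finite {j. w j * snd a j \<noteq> 0}" "finite {j. w j * snd b j \<noteq> 0}"
    using assms by (simp_all add: sv_carrier_iff finite_support_mult)
  then have "finite {j. t * fst a j \<noteq> 0}" "finite {j. t * (w j * snd a j) \<noteq> 0}"
    by (simp_all add: finite_support_mult)
  note sum = laurent_eval_add[OF this(1) \<open>finite {j. fst b j \<noteq> 0}\<close>]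
    laurent_eval_add[OF this(2) \<open>finite {j. w j * snd b j \<noteq> 0}\<close>]
  have "fst (sv_add (sv_smult t a) b) = (\<lambda>j. t * fst a j + fst b j)"
    and "(\<lambda>j. w j * snd (sv_add (sv_smult t a) b) j) = (\<lambda>j. t * (w j * snd a j) + w j * snd b j)"
    by (simp_all add: sv_add_def sv_smult_def fun_eq_iff algebra_simps)
  then show "laurent_eval (fst (sv_add (sv_smult t a) b)) z = t * laurent_eval (fst a) z + laurent_eval (fst b) z"
    and "laurent_eval (\<lambda>j. w j * snd (sv_add (sv_smult t a) b) j) z =
      t * laurent_eval (\<lambda>j. w j * snd a j) z + laurent_eval (\<lambda>j. w j * snd b j) z"
    by (simp_all only: sum laurent_eval_cmult)
qed

(* The weight is symmetric in n and p and turns both [x, G_n] and [x, G_p] into shifts of the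
   same series F, so the combination G_n - z^(n-p) G_p produces no contribution at all. *)
lemma local_derivation_Gb_laurent:
  assumes \<Delta>: "sv_local_derivation \<Delta>" and z: "z \<noteq> 0"
  shows "laurent_eval (fst (\<Delta> (Gb n))) z = z powi (n - p) * laurent_eval (fst (\<Delta> (Gb p))) z"
    and "laurent_eval (\<lambda>j. of_int ((j - p - 2 * n) * (j - n - 2 * p)) * snd (\<Delta> (Gb n)) j) z =
      z powi (n - p) * laurent_eval (\<lambda>j. of_int ((j - p - 2 * n) * (j - n - 2 * p)) * snd (\<Delta> (Gb p)) j) z"
proof -
  define t where "t = - (z powi (n - p))"
  have cancel: "t * z powi p + z powi n = 0"
    using z power_int_add[of z "n - p" p] by (simp add: t_def)
  obtain x where x: "x \<in> sv_carrier" and eq: "sv_add (sv_smult t (\<Delta> (Gb p))) (\<Delta> (Gb n)) =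
      sv_add (sv_smult t (sv_br x (Gb p))) (sv_br x (Gb n))"
    using sv_local_derivation_Gb_pair[OF \<Delta>] by blast
  have carrier: "\<Delta> (Gb k) \<in> sv_carrier" "sv_br x (Gb k) \<in> sv_carrier" for k
    by (simp_all add: sv_local_derivation_carrier[OF \<Delta>] sv_br_Gb_carrier[OF x])
  have solve: "B = z powi (n - p) * A" if "t * A + B = 0" for A B
    using that by (simp add: t_def add_eq_0_iff)
  from arg_cong[OF eq, of "\<lambda>y. laurent_eval (fst y) z"]
  have "t * laurent_eval (fst (\<Delta> (Gb p))) z + laurent_eval (fst (\<Delta> (Gb n))) z =
      t * laurent_eval (fst (sv_br x (Gb p))) z + laurent_eval (fst (sv_br x (Gb n))) z"
    by (simp only: laurent_eval_sv_combination carrier)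
  also have "\<dots> = 2 * (t * z powi p + z powi n) * laurent_eval (snd x) z"
    by (simp add: laurent_eval_fst_br_Gb[OF x z] algebra_simps)
  finally show "laurent_eval (fst (\<Delta> (Gb n))) z = z powi (n - p) * laurent_eval (fst (\<Delta> (Gb p))) z"
    by (intro solve) (simp add: cancel)
  define w where "w j = (of_int ((j - p - 2 * n) * (j - n - 2 * p)) :: complex)" for j
  define F where "F k = of_int ((k - 2 * n) * (k - 2 * p) * (k - n - p)) * fst x k" for k
  from arg_cong[OF eq, of "\<lambda>y. laurent_eval (\<lambda>j. w j * snd y j) z"]
  have "t * laurent_eval (\<lambda>j. w j * snd (\<Delta> (Gb p)) j) z + laurent_eval (\<lambda>j. w j * snd (\<Delta> (Gb n)) j) z =
      t * laurent_eval (\<lambda>j. w j * snd (sv_br x (Gb p)) j) z + laurent_eval (\<lambda>j. w j * snd (sv_br x (Gb n)) j) z"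
    by (simp only: laurent_eval_sv_combination carrier)
  also have "\<dots> = (t * z powi p + z powi n) / 2 * laurent_eval F z"
    using laurent_eval_weighted_snd_br_Gb[OF x z, of n p] laurent_eval_weighted_snd_br_Gb[OF x z, of p n]
    unfolding w_def F_def by (simp add: algebra_simps)
  finally show "laurent_eval (\<lambda>j. of_int ((j - p - 2 * n) * (j - n - 2 * p)) * snd (\<Delta> (Gb n)) j) z =
      z powi (n - p) * laurent_eval (\<lambda>j. of_int ((j - p - 2 * n) * (j - n - 2 * p)) * snd (\<Delta> (Gb p)) j) z"
    unfolding w_def[symmetric] by (intro solve) (simp add: cancel)
qed

lemma local_derivation_Gb_support:
  assumes \<Delta>: "sv_local_derivation \<Delta>" and G0: "\<Delta> (Gb 0) = sv_zero"
  shows "fst (\<Delta> (Gb n)) j = 0"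
    and "j \<noteq> n \<Longrightarrow> j \<noteq> 2 * n \<Longrightarrow> snd (\<Delta> (Gb n)) j = 0"
proof -
  have "\<Delta> (Gb n) \<in> sv_carrier" by (rule sv_local_derivation_carrier[OF \<Delta> Gb_carrier])
  then have fin: "finite {j. fst (\<Delta> (Gb n)) j \<noteq> 0}" "finite {j. snd (\<Delta> (Gb n)) j \<noteq> 0}"
    by (simp_all add: sv_carrier_iff)
  have zero: "laurent_eval (\<lambda>_. 0) z = 0" for z by (simp add: laurent_eval_def)
  note laurent = local_derivation_Gb_laurent[OF \<Delta>, of _ n 0, unfolded G0]
  show "fst (\<Delta> (Gb n)) j = 0"
    using laurent(1) by (intro laurent_eval_eq_0_imp_zero[OF fin(1)]) (simp add: sv_zero_def zero)
  assume "j \<noteq> n" "j \<noteq> 2 * n"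
  have "of_int ((j - n) * (j - 2 * n)) * snd (\<Delta> (Gb n)) j = 0"
    using laurent(2) by (intro laurent_eval_eq_0_imp_zero[OF finite_support_mult[OF fin(2)]])
      (simp add: sv_zero_def zero)
  moreover have "of_int ((j - n) * (j - 2 * n)) \<noteq> (0 :: complex)"
    using \<open>j \<noteq> n\<close> \<open>j \<noteq> 2 * n\<close> by (subst of_int_eq_0_iff) simp
  ultimately show "snd (\<Delta> (Gb n)) j = 0" by simp
qed

lemma local_derivation_Gb_double_index:
  assumes \<Delta>: "sv_local_derivation \<Delta>" and G0: "\<Delta> (Gb 0) = sv_zero" and "n \<noteq> 0"
  shows "snd (\<Delta> (Gb n)) (2 * n) = 0"
proof -
  define c where "c = (3 * of_int n * of_int n :: complex)"
  have "c \<noteq> 0" using \<open>n \<noteq> 0\<close> by (simp add: c_def)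
  have "c * snd (\<Delta> (Gb n)) (2 * n) * z powi (2 * n) = c * snd (\<Delta> (Gb (- n))) (- 2 * n)"
    if "z \<noteq> 0" for z
  proof -
    note laurent = local_derivation_Gb_laurent(2)[OF \<Delta> that, of n "- n"]
    have "of_int ((j - - n - 2 * n) * (j - n - 2 * - n)) * snd (\<Delta> (Gb n)) j = 0"
      if "j \<noteq> 2 * n" for j
      using local_derivation_Gb_support(2)[OF \<Delta> G0 _ that] by (cases "j = n") auto
    then have "laurent_eval (\<lambda>j. of_int ((j - - n - 2 * n) * (j - n - 2 * - n)) * snd (\<Delta> (Gb n)) j) z =
        c * snd (\<Delta> (Gb n)) (2 * n) * z powi (2 * n)"
      by (subst laurent_eval_single[where a = "2 * n"]) (auto simp: c_def)
    moreover have "of_int ((j - - n - 2 * n) * (j - n - 2 * - n)) * snd (\<Delta> (Gb (- n))) j = 0"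
      if "j \<noteq> - 2 * n" for j
      using local_derivation_Gb_support(2)[OF \<Delta> G0, of j "- n"] that by (cases "j = - n") auto
    then have "laurent_eval (\<lambda>j. of_int ((j - - n - 2 * n) * (j - n - 2 * - n)) * snd (\<Delta> (Gb (- n))) j) z =
        c * snd (\<Delta> (Gb (- n))) (- 2 * n) * z powi (- 2 * n)"
      by (subst laurent_eval_single[where a = "- 2 * n"]) (auto simp: c_def)
    moreover have "z powi (n - - n) * z powi (- 2 * n) = 1"
      using that power_int_add[of z "2 * n" "- 2 * n"] by simp
    ultimately show ?thesis using laurent \<open>z \<noteq> 0\<close> by (simp add: algebra_simps) auto
  qed
  with \<open>c \<noteq> 0\<close> have invariant: "snd (\<Delta> (Gb n)) (2 * n) * z powi (2 * n) = snd (\<Delta> (Gb (- n))) (- 2 * n)"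
    if "z \<noteq> 0" for z
    using that by simp
  define f where "f j = (if j = 2 * n then snd (\<Delta> (Gb n)) (2 * n)
    else if j = 0 then - snd (\<Delta> (Gb (- n))) (- 2 * n) else 0)" for j
  have "finite {j. f j \<noteq> 0}"
    by (rule finite_subset[of _ "{2 * n, 0}"]) (auto simp: f_def)
  moreover have "laurent_eval f z = 0" if "z \<noteq> 0" for z
    using \<open>n \<noteq> 0\<close> invariant[OF that]
    by (subst laurent_eval_superset[of "{2 * n, 0}"]) (auto simp: f_def)
  ultimately have "f (2 * n) = 0" by (rule laurent_eval_eq_0_imp_zero)
  then show ?thesis by (simp add: f_def)
qed

theorem lemma3p5:
  assumes "sv_local_derivation \<Delta>"
    and "\<Delta> (Gb 0) = sv_zero"
  shows "\<forall>m::int. m \<noteq> 0 \<longrightarrow> (\<exists>a::complex. \<Delta> (Gb m) = sv_smult a (Gb m))"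
proof (intro allI impI)
  fix m :: int
  assume "m \<noteq> 0"
  have "fst (\<Delta> (Gb m)) j = 0" for j
    using local_derivation_Gb_support(1)[OF assms] .
  moreover have "snd (\<Delta> (Gb m)) j = 0" if "j \<noteq> m" for j
    using local_derivation_Gb_support(2)[OF assms that] local_derivation_Gb_double_index[OF assms \<open>m \<noteq> 0\<close>]
    by (cases "j = 2 * m") auto
  ultimately have "\<Delta> (Gb m) = sv_smult (snd (\<Delta> (Gb m)) m) (Gb m)"
    by (auto simp: sv_smult_def Gb_def prod_eq_iff fun_eq_iff)
  then show "\<exists>a. \<Delta> (Gb m) = sv_smult a (Gb m)" ..
qed

end
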